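(* For a round $t\ge2$, there is a point $W\in\mathbb R^{(t-1)K}$ such that \[\Delta_{t-1}(W)\le 8\sqrt{K/\beta_t},\qquad W\in\mathcal C,\qquad \forall Z\in\mathcal C:\ \mathbb{E}_{x\sim h_{t-1}}\Bigl[\sum_a\frac{Z(x,a)}{W'(x,a)}\Bigr]\le\max\{4K,\beta_t\Delta_{t-1}(Z)^2\}.\] In particular, the value $\mathrm{OPT}_t$ of the RandomizedUCB optimization problem in round $t$ is bounded by $8\sqrt{K/\beta_t}\le110\sqrt{KC_{t-1}/(t-1)}$.
   Context: $A$ is a set of $K$ actions, $X$ a set of contexts, $\Pi$ a finite set of $N$ policies $\pi:X\to A$, $\delta\in(0,1)$. $h_{t-1}=((x_i,a_i,r_i,p_i))_{i=1}^{t-1}$ is a history with $r_i\in[0,1]$, $p_i\in(0,1]$. $C_t=2\log(Nt/\delta)$, $\mu_t=\min\{\frac1{2K},\sqrt{C_t/(2Kt)}\}$, $\beta_t=\frac{t-1}{180C_{t-1}}$. Vectors have coordinates indexed by $(x,a)\in\{x_1,\dots,x_{t-1}\}\times A$; policy $\pi$ is identified with $\pi(x,a)=\mathbb{I}(\pi(x)=a)$; $\mathcal C$ is the convex hull of policy vectors; for a distribution $P$ over $\Pi$, $W_P(x,a)=\sum_{\pi:\pi(x)=a}P(\pi)\in\mathcal C$. $W'(x,a)=(1-K\mu_t)W(x,a)+\mu_t$. $\mathbb{E}_{x\sim h_{t-1}}$ is the average over $x_1,\dots,x_{t-1}$. $\eta_{t-1}(W)=\frac1{t-1}\sum_i r_iW(x_i,a_i)/p_i$,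 $\Delta_{t-1}(W)=\max_{\pi}\eta_{t-1}(\pi)-\eta_{t-1}(W)$. The RandomizedUCB optimization problem in round $t$ is: minimize $\sum_\pi P(\pi)\Delta_{t-1}(\pi)$ over distributions $P$ on $\Pi$ subject to, for all distributions $Q$ over $\Pi$, $\mathbb{E}_{\pi\sim Q}\mathbb{E}_{x\sim h_{t-1}}[1/((1-K\mu_t)W_P(x,\pi(x))+\mu_t)]\le\max\{4K,(t-1)\Delta_{t-1}(W_Q)^2/(180C_{t-1})\}$; $\mathrm{OPT}_t$ is its optimal value. *)

theory Defs
  imports "HOL-Analysis.Analysis"
begin

text \<open>A history entry is (x_i, a_i, r_i, p_i).  Histories are lists; h ! (i-1) is round i.
  Vectors in R^{(t-1)K} are functions on pairs (x,a), required to vanish outside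
  the index set {x_1,...,x_{t-1}} x A.\<close>

type_synonym ('x,'a) hist = "('x \<times> 'a \<times> real \<times> real) list"

definition hctx :: "('x,'a) hist \<Rightarrow> 'x set" where
  "hctx h = (\<lambda>(x,a,r,p). x) ` set h"

definition polvec :: "'a set \<Rightarrow> ('x,'a) hist \<Rightarrow> ('x \<Rightarrow> 'a) \<Rightarrow> ('x \<times> 'a \<Rightarrow> real)" where
  "polvec A h \<pi> = (\<lambda>(x,a). if x \<in> hctx h \<and> a \<in> A \<and> \<pi> x = a then 1 else 0)"

definition fconv_hull :: "('b \<Rightarrow> real) set \<Rightarrow> ('b \<Rightarrow> real) set" where
  "fconv_hull S = {W. \<exists>u. (\<forall>v\<in>S. 0 \<le> u v) \<and> sum u S = 1 \<and>
                          W = (\<lambda>z. \<Sum>v\<in>S. u v * v z)}"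

definition CC :: "'a set \<Rightarrow> ('x,'a) hist \<Rightarrow> ('x \<Rightarrow> 'a) set \<Rightarrow> ('x \<times> 'a \<Rightarrow> real) set" where
  "CC A h Pol = fconv_hull (polvec A h ` Pol)"

definition is_dist :: "('x \<Rightarrow> 'a) set \<Rightarrow> (('x \<Rightarrow> 'a) \<Rightarrow> real) \<Rightarrow> bool" where
  "is_dist Pol P \<longleftrightarrow> (\<forall>\<pi>\<in>Pol. 0 \<le> P \<pi>) \<and> sum P Pol = 1"

definition WP :: "'a set \<Rightarrow> ('x,'a) hist \<Rightarrow> ('x \<Rightarrow> 'a) set \<Rightarrow> (('x \<Rightarrow> 'a) \<Rightarrow> real) \<Rightarrow> ('x \<times> 'a \<Rightarrow> real)" where
  "WP A h Pol P = (\<lambda>(x,a). if x \<in> hctx h \<and> a \<in> A then (\<Sum>\<pi>\<in>{\<pi>\<in>Pol. \<pi> x = a}. P \<pi>) else 0)"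

definition Ex_h :: "('x,'a) hist \<Rightarrow> ('x \<Rightarrow> real) \<Rightarrow> real" where
  "Ex_h h f = (\<Sum>i<length h. f (fst (h ! i))) / real (length h)"

definition eta :: "('x,'a) hist \<Rightarrow> ('x \<times> 'a \<Rightarrow> real) \<Rightarrow> real" where
  "eta h W = (\<Sum>i<length h. (case h ! i of (x,a,r,p) \<Rightarrow> r * W (x,a) / p)) / real (length h)"

definition Delta :: "'a set \<Rightarrow> ('x,'a) hist \<Rightarrow> ('x \<Rightarrow> 'a) set \<Rightarrow> ('x \<times> 'a \<Rightarrow> real) \<Rightarrow> real" where
  "Delta A h Pol W = Max ((\<lambda>\<pi>. eta h (polvec A h \<pi>)) ` Pol) - eta h W"

definition Cc :: "nat \<Rightarrow> real \<Rightarrow> nat \<Rightarrow> real" where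
  "Cc N \<delta> t = 2 * ln (real N * real t / \<delta>)"

definition mu :: "nat \<Rightarrow> nat \<Rightarrow> real \<Rightarrow> nat \<Rightarrow> real" where
  "mu K N \<delta> t = min (1 / (2 * real K)) (sqrt (Cc N \<delta> t / (2 * real K * real t)))"

definition beta :: "nat \<Rightarrow> real \<Rightarrow> nat \<Rightarrow> real" where
  "beta N \<delta> t = real (t - 1) / (180 * Cc N \<delta> (t - 1))"

definition smooth :: "nat \<Rightarrow> real \<Rightarrow> ('x \<times> 'a \<Rightarrow> real) \<Rightarrow> ('x \<times> 'a \<Rightarrow> real)" where
  "smooth K m W = (\<lambda>z. (1 - real K * m) * W z + m)"

text \<open>RandomizedUCB optimization problem in round t (with t-1 = length h)\<close>
definition rucb_feasible :: "'a set \<Rightarrow> ('x,'a) hist \<Rightarrow> ('x \<Rightarrow> 'a) set \<Rightarrow> real \<Rightarrow> nat \<Rightarrow>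
    (('x \<Rightarrow> 'a) \<Rightarrow> real) \<Rightarrow> bool" where
  "rucb_feasible A h Pol \<delta> t P \<longleftrightarrow> is_dist Pol P \<and>
     (\<forall>Q. is_dist Pol Q \<longrightarrow>
        (\<Sum>\<pi>\<in>Pol. Q \<pi> * Ex_h h (\<lambda>x. 1 / ((1 - real (card A) * mu (card A) (card Pol) \<delta> t)
                 * WP A h Pol P (x, \<pi> x) + mu (card A) (card Pol) \<delta> t)))
        \<le> max (4 * real (card A))
               (real (t - 1) * (Delta A h Pol (WP A h Pol Q))\<^sup>2 / (180 * Cc (card Pol) \<delta> (t - 1))))"

definition OPT :: "'a set \<Rightarrow> ('x,'a) hist \<Rightarrow> ('x \<Rightarrow> 'a) set \<Rightarrow> real \<Rightarrow> nat \<Rightarrow> real" where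
  "OPT A h Pol \<delta> t = Inf {(\<Sum>\<pi>\<in>Pol. P \<pi> * Delta A h Pol (polvec A h \<pi>)) | P. rucb_feasible A h Pol \<delta> t P}"

end

theory Submission
  imports Defs
begin

text \<open>The point \<open>W\<close> is the mixture of policies minimising the potential
  \<open>\<lambda> \<Delta>(W) - E\<^sub>x \<Sum>\<^sub>a ln W'(x,a)\<close> over the (compact) simplex of distributions on the policies.
  Since \<open>ln (1 + y) \<ge> y - 2 y\<^sup>2\<close> for \<open>\<bar>y\<bar> \<le> 1/2\<close>, moving from \<open>W\<close> towards any other mixture
  \<open>Z\<close> cannot decrease the potential to first order, i.e.
  \<open>(1 - K\<mu>) E\<^sub>x \<Sum>\<^sub>a Z/W' \<le> (1 - K\<mu>) E\<^sub>x \<Sum>\<^sub>a W/W' + \<lambda> (\<Delta>(Z) - \<Delta>(W))\<close>.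
  The first term on the right is at most \<open>K\<close>.  Taking for \<open>Z\<close> the empirically best policy
  gives \<open>\<Delta>(W) \<le> K/\<lambda>\<close>; for general \<open>Z\<close> it gives \<open>E\<^sub>x \<Sum>\<^sub>a Z/W' \<le> 2 (K + \<lambda> \<Delta>(Z))\<close>.
  With \<open>\<lambda> = \<surd>(K \<beta>) / 4\<close> these are the two claimed bounds, and the second one says that
  the distribution behind \<open>W\<close> is feasible for the RandomizedUCB problem, which bounds \<open>OPT\<close>.\<close>

lemma ln_one_plus_lower_bound:
  fixes y :: real
  assumes "\<bar>y\<bar> \<le> 1/2"
  shows "y - 2 * y^2 \<le> ln (1 + y)"
proof (cases "y \<ge> 0")
  case True
  then have "y - y^2 \<le> ln (1 + y)"
    using assms by (intro ln_one_plus_pos_lower_bound) auto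
  then show ?thesis by (smt (verit) zero_le_power2)
next
  case False
  then have "- (-y) - 2 * (-y)^2 \<le> ln (1 - (-y))"
    using assms by (intro ln_one_minus_pos_lower_bound) auto
  then show ?thesis by simp
qed

lemma nonneg_if_nonneg_add_small:
  fixes X B \<epsilon>\<^sub>0 :: real
  assumes "0 < \<epsilon>\<^sub>0" "0 \<le> B" and small: "\<And>\<epsilon>. 0 < \<epsilon> \<Longrightarrow> \<epsilon> \<le> \<epsilon>\<^sub>0 \<Longrightarrow> 0 \<le> X + \<epsilon> * B"
  shows "0 \<le> X"
proof (rule ccontr)
  assume "\<not> 0 \<le> X"
  define \<epsilon> where "\<epsilon> = min \<epsilon>\<^sub>0 (- X / (2 * (B + 1)))"
  have "0 < - X / (2 * (B + 1))" using \<open>\<not> 0 \<le> X\<close> assms by (intro divide_pos_pos) auto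
  then have "0 < \<epsilon>" using assms by (simp add: \<epsilon>_def)
  have "\<epsilon> * B \<le> (- X / (2 * (B + 1))) * B"
    using assms by (intro mult_right_mono) (auto simp: \<epsilon>_def)
  also have "\<dots> < - X"
    using \<open>\<not> 0 \<le> X\<close> assms mult_nonneg_nonpos[of B X] by (simp add: field_simps)
  finally show False using small[OF \<open>0 < \<epsilon>\<close>] by (simp add: \<epsilon>_def)
qed

lemma sum_ln_directional_derivative_le:
  fixes I :: "'i set" and a d :: "'i \<Rightarrow> real" and c \<mu> :: real
  assumes "finite I" "0 < \<mu>" and a: "\<And>i. i \<in> I \<Longrightarrow> \<mu> \<le> a i" and d: "\<And>i. i \<in> I \<Longrightarrow> \<bar>d i\<bar> \<le> 1"
    and growth: "\<And>\<epsilon>. 0 < \<epsilon> \<Longrightarrow> \<epsilon> \<le> 1 \<Longrightarrow>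
                   (\<Sum>i\<in>I. ln (a i + \<epsilon> * d i)) \<le> c * \<epsilon> + (\<Sum>i\<in>I. ln (a i))"
  shows "(\<Sum>i\<in>I. d i / a i) \<le> c"
proof -
  define B where "B = 2 * (\<Sum>i\<in>I. (d i / a i)^2)"
  have small: "0 \<le> (c - (\<Sum>i\<in>I. d i / a i)) + \<epsilon> * B"
    if \<epsilon>: "0 < \<epsilon>" "\<epsilon> \<le> min 1 (\<mu>/2)" for \<epsilon>
  proof -
    have termwise: "ln (a i) + \<epsilon> * (d i / a i) - \<epsilon>^2 * (2 * (d i / a i)^2) \<le> ln (a i + \<epsilon> * d i)"
      if i: "i \<in> I" for i
    proof -
      have "0 < a i" using a[OF i] \<open>0 < \<mu>\<close> by linarith
      define y where "y = \<epsilon> * (d i / a i)"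
      have "\<bar>y\<bar> = \<epsilon> * \<bar>d i\<bar> / a i" using \<epsilon> \<open>0 < a i\<close> by (simp add: y_def abs_mult)
      also have "\<dots> \<le> \<epsilon> * 1 / \<mu>"
        using d[OF i] a[OF i] \<epsilon> \<open>0 < \<mu>\<close> by (intro frac_le mult_left_mono) auto
      also have "\<dots> \<le> 1/2" using \<epsilon> \<open>0 < \<mu>\<close> by (simp add: field_simps)
      finally have "\<bar>y\<bar> \<le> 1/2" .
      moreover have "a i + \<epsilon> * d i = a i * (1 + y)" using \<open>0 < a i\<close> by (simp add: y_def field_simps)
      ultimately have "ln (a i + \<epsilon> * d i) = ln (a i) + ln (1 + y)"
        using \<open>0 < a i\<close> by (simp add: ln_mult)
      moreover have "\<epsilon>^2 * (2 * (d i / a i)^2) = 2 * y^2"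
        unfolding y_def power_mult_distrib by simp
      moreover have "\<epsilon> * (d i / a i) = y" by (simp add: y_def)
      ultimately show ?thesis
        using ln_one_plus_lower_bound[OF \<open>\<bar>y\<bar> \<le> 1/2\<close>] by linarith
    qed
    have "(\<Sum>i\<in>I. ln (a i)) + \<epsilon> * (\<Sum>i\<in>I. d i / a i) - \<epsilon>^2 * B \<le> (\<Sum>i\<in>I. ln (a i + \<epsilon> * d i))"
      using sum_mono[OF termwise]
      by (simp add: B_def sum.distrib sum_subtractf sum_distrib_left)
    with growth[of \<epsilon>] \<epsilon> have "0 \<le> \<epsilon> * ((c - (\<Sum>i\<in>I. d i / a i)) + \<epsilon> * B)"
      by (simp add: algebra_simps power2_eq_square)
    then show ?thesis using \<epsilon> by (simp add: zero_le_mult_iff)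
  qed
  have "0 \<le> B" by (simp add: B_def sum_nonneg)
  then have "0 \<le> c - (\<Sum>i\<in>I. d i / a i)"
    using nonneg_if_nonneg_add_small[of "min 1 (\<mu>/2)" B, OF _ _ small] \<open>0 < \<mu>\<close> by simp
  then show ?thesis by simp
qed

lemma twice_add_sqrt_le_max:
  fixes K b D :: real
  assumes "1 \<le> K" "0 < b" "0 \<le> D"
  shows "2 * (K + sqrt (K * b) / 4 * D) \<le> max (4 * K) (b * D^2)"
proof -
  define s where "s = b * D^2"
  define y where "y = sqrt (K * b) * D"
  have "0 \<le> y" and y2: "y^2 = K * s"
    using assms by (simp_all add: y_def s_def power_mult_distrib)
  have "y \<le> 2 * K \<or> y \<le> s / 2"
  proof (cases "s \<le> 4 * K")
    case True
    then have "y^2 \<le> (2 * K)^2" using y2 assms by (simp add: power2_eq_square)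
    then show ?thesis using assms by (auto intro: power2_le_imp_le)
  next
    case False
    then have "y^2 \<le> (s / 2)^2" using y2 assms by (simp add: power2_eq_square mult_right_mono)
    then show ?thesis using False assms by (auto intro: power2_le_imp_le)
  qed
  then have "2 * K + y / 2 \<le> max (4 * K) s" using assms by (auto simp: max_def)
  then show ?thesis by (simp add: s_def y_def algebra_simps)
qed

lemma Ex_h_le_const:
  assumes "\<And>x. f x \<le> c" "0 \<le> c"
  shows "Ex_h h f \<le> c"
proof -
  have "(\<Sum>i<length h. f (fst (h ! i))) \<le> real (length h) * c"
    using sum_mono[of "{..<length h}" "\<lambda>i. f (fst (h ! i))" "\<lambda>_. c"] assms(1) by simp
  then show ?thesis
    using assms(2) unfolding Ex_h_def by (cases "h = []") (simp_all add: divide_le_eq mult.commute)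
qed

lemma Ex_h_nonneg: "(\<And>x. 0 \<le> f x) \<Longrightarrow> 0 \<le> Ex_h h f"
  unfolding Ex_h_def by (intro divide_nonneg_nonneg sum_nonneg) auto

lemma length_mult_Ex_h:
  "h \<noteq> [] \<Longrightarrow> real (length h) * Ex_h h f = (\<Sum>i<length h. f (fst (h ! i)))"
  unfolding Ex_h_def by simp

lemma sum_history_actions_eq_Ex_h:
  "h \<noteq> [] \<Longrightarrow> (\<Sum>i\<in>{..<length h} \<times> A. f (fst (h ! fst i), snd i))
      = real (length h) * Ex_h h (\<lambda>x. \<Sum>a\<in>A. f (x, a))"
  by (simp add: length_mult_Ex_h sum.cartesian_product' split_def)

definition polmix :: "'a set \<Rightarrow> ('x,'a) hist \<Rightarrow> ('x \<Rightarrow> 'a) set \<Rightarrow> (('x \<Rightarrow> 'a) \<Rightarrow> real) \<Rightarrow> ('x \<times> 'a \<Rightarrow> real)" where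
  "polmix A h Pol P = (\<lambda>z. \<Sum>\<pi>\<in>Pol. P \<pi> * polvec A h \<pi> z)"

lemma WP_eq_polmix: "finite Pol \<Longrightarrow> WP A h Pol P = polmix A h Pol P"
  unfolding WP_def polmix_def polvec_def
  by (auto simp: fun_eq_iff sum.inter_filter intro!: sum.cong)

lemma polmix_nonneg: "\<forall>\<pi>\<in>Pol. 0 \<le> P \<pi> \<Longrightarrow> 0 \<le> polmix A h Pol P z"
  unfolding polmix_def polvec_def by (auto intro: sum_nonneg split: prod.splits)

lemma polmix_le_one:
  assumes "finite Pol" "is_dist Pol P"
  shows "polmix A h Pol P z \<le> 1"
proof -
  have "polmix A h Pol P z \<le> (\<Sum>\<pi>\<in>Pol. P \<pi> * 1)"
    using assms unfolding polmix_def is_dist_def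
    by (intro sum_mono mult_left_mono) (auto simp: polvec_def split: prod.splits)
  then show ?thesis using assms by (simp add: is_dist_def)
qed

lemma polmix_point_mass:
  assumes "finite Pol" "\<pi>\<^sub>0 \<in> Pol"
  shows "polmix A h Pol (\<lambda>\<pi>. if \<pi> = \<pi>\<^sub>0 then 1 else 0) = polvec A h \<pi>\<^sub>0"
  unfolding polmix_def by (rule ext) (simp add: assms if_distrib[of "\<lambda>u. u * _"] sum.delta cong: if_cong)

lemma eta_polmix: "eta h (polmix A h Pol P) = (\<Sum>\<pi>\<in>Pol. P \<pi> * eta h (polvec A h \<pi>))"
proof -
  have "(case h ! i of (x,a,r,p) \<Rightarrow> r * polmix A h Pol P (x,a) / p) =
        (\<Sum>\<pi>\<in>Pol. P \<pi> * (case h ! i of (x,a,r,p) \<Rightarrow> r * polvec A h \<pi> (x,a) / p))" for i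
    by (auto simp: polmix_def sum_distrib_left sum_divide_distrib algebra_simps split: prod.splits)
  then have "eta h (polmix A h Pol P) =
      (\<Sum>i<length h. \<Sum>\<pi>\<in>Pol. P \<pi> * (case h ! i of (x,a,r,p) \<Rightarrow> r * polvec A h \<pi> (x,a) / p)) / real (length h)"
    unfolding eta_def by simp
  also have "\<dots> =
      (\<Sum>\<pi>\<in>Pol. \<Sum>i<length h. P \<pi> * (case h ! i of (x,a,r,p) \<Rightarrow> r * polvec A h \<pi> (x,a) / p)) / real (length h)"
    by (subst sum.swap) (rule refl)
  also have "\<dots> = (\<Sum>\<pi>\<in>Pol. P \<pi> * eta h (polvec A h \<pi>))"
    unfolding eta_def sum_divide_distrib by (simp add: sum_distrib_left)
  finally show ?thesis .
qed

lemma polmix_segment: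
  "polmix A h Pol (\<lambda>\<pi>. P \<pi> + \<epsilon> * (Q \<pi> - P \<pi>))
     = (\<lambda>z. polmix A h Pol P z + \<epsilon> * (polmix A h Pol Q z - polmix A h Pol P z))"
  unfolding polmix_def by (simp add: fun_eq_iff algebra_simps sum.distrib sum_subtractf sum_distrib_left)

lemma Delta_polmix_segment:
  "Delta A h Pol (polmix A h Pol (\<lambda>\<pi>. P \<pi> + \<epsilon> * (Q \<pi> - P \<pi>)))
     = Delta A h Pol (polmix A h Pol P)
       + \<epsilon> * (Delta A h Pol (polmix A h Pol Q) - Delta A h Pol (polmix A h Pol P))"
  unfolding Delta_def eta_polmix by (simp add: algebra_simps sum.distrib sum_subtractf sum_distrib_left)

lemma Delta_polvec_nonneg: "finite Pol \<Longrightarrow> \<pi> \<in> Pol \<Longrightarrow> 0 \<le> Delta A h Pol (polvec A h \<pi>)"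
  unfolding Delta_def by simp

lemma Delta_polmix:
  assumes "is_dist Pol P"
  shows "Delta A h Pol (polmix A h Pol P) = (\<Sum>\<pi>\<in>Pol. P \<pi> * Delta A h Pol (polvec A h \<pi>))"
  using assms unfolding Delta_def eta_polmix is_dist_def
  by (simp add: right_diff_distrib sum_subtractf sum_distrib_right[symmetric])

lemma Delta_polmix_nonneg:
  "finite Pol \<Longrightarrow> is_dist Pol P \<Longrightarrow> 0 \<le> Delta A h Pol (polmix A h Pol P)"
  by (auto simp: Delta_polmix is_dist_def intro!: sum_nonneg mult_nonneg_nonneg Delta_polvec_nonneg)

lemma polmix_in_CC:
  assumes fin: "finite Pol" and P: "is_dist Pol P"
  shows "polmix A h Pol P \<in> CC A h Pol"
proof -
  define u where "u v = (\<Sum>\<pi>\<in>{\<pi>\<in>Pol. polvec A h \<pi> = v}. P \<pi>)" for v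
  have "\<forall>v\<in>polvec A h ` Pol. 0 \<le> u v"
    using P unfolding u_def is_dist_def by (auto intro: sum_nonneg)
  moreover have "sum u (polvec A h ` Pol) = 1"
    using P sum.image_gen[OF fin, of P "polvec A h"] unfolding u_def is_dist_def by simp
  moreover have "polmix A h Pol P = (\<lambda>z. \<Sum>v\<in>polvec A h ` Pol. u v * v z)"
    unfolding polmix_def u_def
    by (subst sum.image_gen[OF fin, of _ "polvec A h"]) (auto simp: sum_distrib_right intro!: sum.cong)
  ultimately show ?thesis unfolding CC_def fconv_hull_def by blast
qed

text \<open>The weight of a vertex is spread evenly over the policies inducing it.\<close>
lemma CC_obtain_polmix:
  assumes fin: "finite Pol" and "W \<in> CC A h Pol"
  obtains P where "is_dist Pol P" "W = polmix A h Pol P"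
proof -
  obtain u where u0: "\<forall>v\<in>polvec A h ` Pol. 0 \<le> u v" and u1: "sum u (polvec A h ` Pol) = 1"
    and W: "W = (\<lambda>z. \<Sum>v\<in>polvec A h ` Pol. u v * v z)"
    using assms(2) unfolding CC_def fconv_hull_def by blast
  define F where "F v = {\<pi>\<in>Pol. polvec A h \<pi> = v}" for v
  have "card (F v) > 0" if "v \<in> polvec A h ` Pol" for v
    using that fin unfolding F_def by (auto simp: card_gt_0_iff)
  define P where "P \<pi> = u (polvec A h \<pi>) / card (F (polvec A h \<pi>))" for \<pi>
  have mix: "(\<Sum>\<pi>\<in>Pol. P \<pi> * g (polvec A h \<pi>)) = (\<Sum>v\<in>polvec A h ` Pol. u v * g v)"
    for g :: "_ \<Rightarrow> real"
  proof -
    have "(\<Sum>\<pi>\<in>Pol. P \<pi> * g (polvec A h \<pi>)) = (\<Sum>v\<in>polvec A h ` Pol. \<Sum>\<pi>\<in>F v. P \<pi> * g (polvec A h \<pi>))"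
      unfolding F_def by (rule sum.image_gen[OF fin])
    also have "\<dots> = (\<Sum>v\<in>polvec A h ` Pol. \<Sum>\<pi>\<in>F v. u v / card (F v) * g v)"
      by (intro sum.cong refl) (auto simp: P_def F_def)
    also have "\<dots> = (\<Sum>v\<in>polvec A h ` Pol. u v * g v)"
      using \<open>\<And>v. v \<in> polvec A h ` Pol \<Longrightarrow> card (F v) > 0\<close> by (intro sum.cong refl) simp
    finally show ?thesis .
  qed
  have "is_dist Pol P"
    using u0 u1 mix[of "\<lambda>_. 1"] by (auto simp: is_dist_def P_def)
  moreover have "W = polmix A h Pol P"
    using mix[of "\<lambda>v. v _"] by (simp add: W polmix_def fun_eq_iff)
  ultimately show ?thesis by (rule that)
qed

text \<open>Distributions are normalised to vanish off \<open>Pol\<close>, which makes them a compact set in the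
  product topology.\<close>
definition dist_simplex :: "('x \<Rightarrow> 'a) set \<Rightarrow> (('x \<Rightarrow> 'a) \<Rightarrow> real) set" where
  "dist_simplex Pol = PiE UNIV (\<lambda>\<pi>. if \<pi> \<in> Pol then {0..1} else {0}) \<inter> {P. sum P Pol = 1}"

lemma dist_simplex_iff:
  "P \<in> dist_simplex Pol \<longleftrightarrow>
     (\<forall>\<pi>\<in>Pol. 0 \<le> P \<pi> \<and> P \<pi> \<le> 1) \<and> (\<forall>\<pi>. \<pi> \<notin> Pol \<longrightarrow> P \<pi> = 0) \<and> sum P Pol = 1"
  unfolding dist_simplex_def by (auto simp: PiE_UNIV_domain Pi_iff split: if_splits)

lemma dist_simplex_is_dist: "P \<in> dist_simplex Pol \<Longrightarrow> is_dist Pol P"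
  by (auto simp: dist_simplex_iff is_dist_def)

lemma is_dist_restrict_in_dist_simplex:
  assumes "finite Pol" "is_dist Pol Q"
  shows "(\<lambda>\<pi>. if \<pi> \<in> Pol then Q \<pi> else 0) \<in> dist_simplex Pol"
proof -
  have "Q \<pi> \<le> sum Q Pol" if "\<pi> \<in> Pol" for \<pi>
    using assms that by (intro member_le_sum) (auto simp: is_dist_def)
  then show ?thesis using assms by (auto simp: dist_simplex_iff is_dist_def intro: sum.cong)
qed

lemma polmix_restrict:
  "polmix A h Pol (\<lambda>\<pi>. if \<pi> \<in> Pol then Q \<pi> else 0) = polmix A h Pol Q"
  unfolding polmix_def by (auto intro!: sum.cong)

lemma dist_simplex_convex:
  assumes P: "P \<in> dist_simplex Pol" and Q: "Q \<in> dist_simplex Pol" and "0 \<le> \<epsilon>" "\<epsilon> \<le> 1"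
  shows "(\<lambda>\<pi>. P \<pi> + \<epsilon> * (Q \<pi> - P \<pi>)) \<in> dist_simplex Pol"
proof -
  define R where "R \<pi> = (1 - \<epsilon>) * P \<pi> + \<epsilon> * Q \<pi>" for \<pi>
  have "0 \<le> R \<pi> \<and> R \<pi> \<le> 1" if "\<pi> \<in> Pol" for \<pi>
    using P Q that assms(3,4) convex_bound_le[of "P \<pi>" 1 "Q \<pi>" "1 - \<epsilon>" \<epsilon>]
    by (auto simp: dist_simplex_iff R_def)
  moreover have "R \<pi> = 0" if "\<pi> \<notin> Pol" for \<pi>
    using P Q that by (simp add: dist_simplex_iff R_def)
  moreover have "sum R Pol = 1"
    using P Q by (simp add: dist_simplex_iff R_def sum.distrib sum_distrib_left[symmetric])
  moreover have "(\<lambda>\<pi>. P \<pi> + \<epsilon> * (Q \<pi> - P \<pi>)) = R"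
    by (simp add: R_def fun_eq_iff algebra_simps)
  ultimately show ?thesis by (simp add: dist_simplex_iff)
qed

lemma compact_dist_simplex:
  fixes Pol :: "('x \<Rightarrow> 'a) set"
  shows "compact (dist_simplex Pol)"
proof -
  have "compactin (product_topology (\<lambda>_. euclidean) UNIV)
          (PiE UNIV (\<lambda>\<pi>. if \<pi> \<in> Pol then {0..1::real} else {0}))"
    by (subst compactin_PiE) auto
  then have "compact (PiE UNIV (\<lambda>\<pi>. if \<pi> \<in> Pol then {0..1::real} else {0}))"
    by (simp add: euclidean_product_topology)
  moreover have "continuous_on UNIV (\<lambda>P :: ('x \<Rightarrow> 'a) \<Rightarrow> real. sum P Pol)"
    by (intro continuous_intros continuous_on_product_coordinates)
  then have "closed {P :: ('x \<Rightarrow> 'a) \<Rightarrow> real. sum P Pol = 1}"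
    by (intro closed_Collect_eq) auto
  ultimately show ?thesis
    unfolding dist_simplex_def by (rule compact_Int_closed)
qed

lemma continuous_on_coordinate: "continuous_on S (\<lambda>P. P \<pi>)"
  by (rule continuous_on_product_then_coordinatewise[OF continuous_on_id])

lemma smooth_polmix_pos:
  assumes "P \<in> dist_simplex Pol" "0 < m" "real K * m \<le> 1"
  shows "0 < smooth K m (polmix A h Pol P) z"
proof -
  have "0 \<le> (1 - real K * m) * polmix A h Pol P z"
    using assms polmix_nonneg[of Pol P] by (simp add: dist_simplex_iff)
  then show ?thesis using assms(2) by (simp add: smooth_def)
qed

definition barrier_potential ::
    "'a set \<Rightarrow> ('x,'a) hist \<Rightarrow> ('x \<Rightarrow> 'a) set \<Rightarrow> real \<Rightarrow> real \<Rightarrow> (('x \<Rightarrow> 'a) \<Rightarrow> real) \<Rightarrow> real" where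
  "barrier_potential A h Pol m lam P = lam * Delta A h Pol (polmix A h Pol P)
     - Ex_h h (\<lambda>x. \<Sum>a\<in>A. ln (smooth (card A) m (polmix A h Pol P) (x, a)))"

lemma length_mult_barrier_potential:
  "h \<noteq> [] \<Longrightarrow> real (length h) * barrier_potential A h Pol m lam P
     = real (length h) * lam * Delta A h Pol (polmix A h Pol P)
       - (\<Sum>i\<in>{..<length h} \<times> A. ln (smooth (card A) m (polmix A h Pol P) (fst (h ! fst i), snd i)))"
  unfolding barrier_potential_def
  by (simp add: right_diff_distrib
      sum_history_actions_eq_Ex_h[where A = A and f = "\<lambda>z. ln (smooth (card A) m (polmix A h Pol P) z)"])

lemma barrier_potential_has_minimizer:
  assumes "finite Pol" "Pol \<noteq> {}" "0 < m" "real (card A) * m \<le> 1"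
  obtains P\<^sub>0 where "P\<^sub>0 \<in> dist_simplex Pol"
    "\<And>P. P \<in> dist_simplex Pol \<Longrightarrow> barrier_potential A h Pol m lam P\<^sub>0 \<le> barrier_potential A h Pol m lam P"
proof -
  have pos: "0 < (1 - real (card A) * m) * (\<Sum>\<pi>\<in>Pol. P \<pi> * polvec A h \<pi> z) + m"
    if "P \<in> dist_simplex Pol" for P z
    using smooth_polmix_pos[OF that assms(3,4)] by (simp add: smooth_def polmix_def)
  obtain \<pi>\<^sub>0 where "\<pi>\<^sub>0 \<in> Pol" using assms(2) by blast
  then have "(\<lambda>\<pi>. if \<pi> = \<pi>\<^sub>0 then 1 else 0) \<in> dist_simplex Pol"
    using assms(1) by (auto simp: dist_simplex_iff)
  then have "dist_simplex Pol \<noteq> {}" by blast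
  moreover have "continuous_on (dist_simplex Pol) (barrier_potential A h Pol m lam)"
    unfolding barrier_potential_def Delta_def eta_polmix
    \<comment> \<open>as a product with \<open>inverse (length h)\<close> the average needs no side condition \<open>h \<noteq> []\<close>\<close>
    unfolding Ex_h_def divide_inverse smooth_def polmix_def
    by (intro continuous_intros continuous_on_coordinate) (metis less_irrefl pos)
  ultimately show ?thesis
    using continuous_attains_inf[OF compact_dist_simplex] that by metis
qed

lemma length_mult_barrier_potential_segment:
  assumes "h \<noteq> []"
  shows "real (length h) * barrier_potential A h Pol m lam (\<lambda>\<pi>. P \<pi> + \<epsilon> * (Q \<pi> - P \<pi>))
     = real (length h) * lam * (Delta A h Pol (polmix A h Pol P)
         + \<epsilon> * (Delta A h Pol (polmix A h Pol Q) - Delta A h Pol (polmix A h Pol P)))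
       - (\<Sum>i\<in>{..<length h} \<times> A. ln (smooth (card A) m (polmix A h Pol P) (fst (h ! fst i), snd i)
           + \<epsilon> * ((1 - real (card A) * m)
               * (polmix A h Pol Q (fst (h ! fst i), snd i) - polmix A h Pol P (fst (h ! fst i), snd i)))))"
  unfolding length_mult_barrier_potential[OF assms] Delta_polmix_segment
  unfolding polmix_segment by (simp add: smooth_def algebra_simps)

lemma barrier_potential_first_order_sum:
  fixes m lam :: real
  assumes "finite A" "finite Pol" "h \<noteq> []" "0 < m" "real (card A) * m \<le> 1/2"
    and P\<^sub>0: "P\<^sub>0 \<in> dist_simplex Pol"
    and min: "\<And>P. P \<in> dist_simplex Pol \<Longrightarrow> barrier_potential A h Pol m lam P\<^sub>0 \<le> barrier_potential A h Pol m lam P"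
    and Q: "Q \<in> dist_simplex Pol"
  defines "W\<^sub>0 \<equiv> polmix A h Pol P\<^sub>0" and "Z \<equiv> polmix A h Pol Q" and "s \<equiv> smooth (card A) m (polmix A h Pol P\<^sub>0)"
    and "k \<equiv> 1 - real (card A) * m"
  shows "(\<Sum>i\<in>{..<length h} \<times> A. k * (Z (fst (h ! fst i), snd i) - W\<^sub>0 (fst (h ! fst i), snd i))
                                   / s (fst (h ! fst i), snd i))
         \<le> real (length h) * lam * (Delta A h Pol Z - Delta A h Pol W\<^sub>0)"
proof -
  define n where "n = real (length h)"
  have "0 < n" using \<open>h \<noteq> []\<close> by (simp add: n_def)
  have k: "1/2 \<le> k" "k \<le> 1" using assms(4,5) by (simp_all add: k_def)
  have "is_dist Pol P\<^sub>0" "is_dist Pol Q" using P\<^sub>0 Q by (simp_all add: dist_simplex_is_dist)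
  then have W\<^sub>01: "0 \<le> W\<^sub>0 z" "W\<^sub>0 z \<le> 1" and Z01: "0 \<le> Z z" "Z z \<le> 1" for z
    unfolding W\<^sub>0_def Z_def using assms(2) by (auto simp: is_dist_def intro: polmix_nonneg polmix_le_one)
  define a where "a i = s (fst (h ! fst i), snd i)" for i
  define d where "d i = k * (Z (fst (h ! fst i), snd i) - W\<^sub>0 (fst (h ! fst i), snd i))" for i
  have "(\<Sum>i\<in>{..<length h} \<times> A. d i / a i) \<le> n * lam * (Delta A h Pol Z - Delta A h Pol W\<^sub>0)"
  proof (rule sum_ln_directional_derivative_le)
    show "m \<le> a i" for i using W\<^sub>01 k by (simp add: a_def s_def smooth_def W\<^sub>0_def[symmetric] k_def[symmetric])
    show "\<bar>d i\<bar> \<le> 1" for i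
    proof -
      let ?z = "(fst (h ! fst i), snd i)"
      have "\<bar>Z ?z - W\<^sub>0 ?z\<bar> \<le> 1" using W\<^sub>01[of ?z] Z01[of ?z] by (simp add: abs_le_iff)
      then have "k * \<bar>Z ?z - W\<^sub>0 ?z\<bar> \<le> 1 * 1" using k by (intro mult_mono) auto
      then show ?thesis using k by (simp add: d_def abs_mult)
    qed
    fix \<epsilon> :: real assume "0 < \<epsilon>" "\<epsilon> \<le> 1"
    have "(\<lambda>\<pi>. P\<^sub>0 \<pi> + \<epsilon> * (Q \<pi> - P\<^sub>0 \<pi>)) \<in> dist_simplex Pol"
      using dist_simplex_convex[OF P\<^sub>0 Q] \<open>0 < \<epsilon>\<close> \<open>\<epsilon> \<le> 1\<close> by simp
    then have "n * barrier_potential A h Pol m lam P\<^sub>0 \<le> n * barrier_potential A h Pol m lam (\<lambda>\<pi>. P\<^sub>0 \<pi> + \<epsilon> * (Q \<pi> - P\<^sub>0 \<pi>))"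
      using min \<open>0 < n\<close> by simp
    moreover have "n * barrier_potential A h Pol m lam P\<^sub>0
        = n * lam * Delta A h Pol W\<^sub>0 - (\<Sum>i\<in>{..<length h} \<times> A. ln (a i))"
      unfolding n_def length_mult_barrier_potential[OF \<open>h \<noteq> []\<close>] by (simp add: a_def s_def W\<^sub>0_def)
    moreover have "n * barrier_potential A h Pol m lam (\<lambda>\<pi>. P\<^sub>0 \<pi> + \<epsilon> * (Q \<pi> - P\<^sub>0 \<pi>))
        = n * lam * (Delta A h Pol W\<^sub>0 + \<epsilon> * (Delta A h Pol Z - Delta A h Pol W\<^sub>0))
          - (\<Sum>i\<in>{..<length h} \<times> A. ln (a i + \<epsilon> * d i))"
      unfolding n_def length_mult_barrier_potential_segment[OF \<open>h \<noteq> []\<close>]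
      by (simp add: a_def d_def s_def k_def W\<^sub>0_def Z_def)
    moreover have "n * lam * (Delta A h Pol W\<^sub>0 + \<epsilon> * (Delta A h Pol Z - Delta A h Pol W\<^sub>0))
        = n * lam * Delta A h Pol W\<^sub>0 + n * lam * (Delta A h Pol Z - Delta A h Pol W\<^sub>0) * \<epsilon>"
      by (simp add: algebra_simps)
    ultimately show "(\<Sum>i\<in>{..<length h} \<times> A. ln (a i + \<epsilon> * d i))
        \<le> n * lam * (Delta A h Pol Z - Delta A h Pol W\<^sub>0) * \<epsilon> + (\<Sum>i\<in>{..<length h} \<times> A. ln (a i))"
      by linarith
  qed (use assms(1,4) in simp_all)
  then show ?thesis by (simp add: a_def d_def n_def)
qed

lemma barrier_potential_first_order:
  fixes m lam :: real
  assumes "finite A" "finite Pol" "h \<noteq> []" "0 < m" "real (card A) * m \<le> 1/2"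
    and P\<^sub>0: "P\<^sub>0 \<in> dist_simplex Pol"
    and min: "\<And>P. P \<in> dist_simplex Pol \<Longrightarrow> barrier_potential A h Pol m lam P\<^sub>0 \<le> barrier_potential A h Pol m lam P"
    and Q: "is_dist Pol Q"
  defines "W\<^sub>0 \<equiv> polmix A h Pol P\<^sub>0" and "Z \<equiv> polmix A h Pol Q" and "s \<equiv> smooth (card A) m (polmix A h Pol P\<^sub>0)"
  shows "(1 - real (card A) * m) * Ex_h h (\<lambda>x. \<Sum>a\<in>A. Z (x, a) / s (x, a))
       \<le> (1 - real (card A) * m) * Ex_h h (\<lambda>x. \<Sum>a\<in>A. W\<^sub>0 (x, a) / s (x, a))
         + lam * (Delta A h Pol Z - Delta A h Pol W\<^sub>0)"
proof -
  define k where "k = 1 - real (card A) * m"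
  define n where "n = real (length h)"
  have "0 < n" using \<open>h \<noteq> []\<close> by (simp add: n_def)
  have "(\<lambda>\<pi>. if \<pi> \<in> Pol then Q \<pi> else 0) \<in> dist_simplex Pol"
    by (rule is_dist_restrict_in_dist_simplex[OF assms(2) Q])
  from barrier_potential_first_order_sum[OF assms(1-5) P\<^sub>0 min this]
  have "(\<Sum>i\<in>{..<length h} \<times> A. k * (Z (fst (h ! fst i), snd i) / s (fst (h ! fst i), snd i))
                                 - k * (W\<^sub>0 (fst (h ! fst i), snd i) / s (fst (h ! fst i), snd i)))
        \<le> n * lam * (Delta A h Pol Z - Delta A h Pol W\<^sub>0)"
    unfolding polmix_restrict by (simp add: W\<^sub>0_def Z_def s_def k_def n_def right_diff_distrib diff_divide_distrib)
  then have "n * (k * Ex_h h (\<lambda>x. \<Sum>a\<in>A. Z (x, a) / s (x, a)))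
      \<le> n * (k * Ex_h h (\<lambda>x. \<Sum>a\<in>A. W\<^sub>0 (x, a) / s (x, a)) + lam * (Delta A h Pol Z - Delta A h Pol W\<^sub>0))"
    unfolding sum_subtractf sum_distrib_left[symmetric] n_def
      sum_history_actions_eq_Ex_h[OF \<open>h \<noteq> []\<close>, where f = "\<lambda>z. Z z / s z"]
      sum_history_actions_eq_Ex_h[OF \<open>h \<noteq> []\<close>, where f = "\<lambda>z. W\<^sub>0 z / s z"]
    by (simp add: algebra_simps)
  then show ?thesis
    unfolding k_def using \<open>0 < n\<close> by (rule mult_left_le_imp_le)
qed

lemma Ex_h_cmult: "c * Ex_h h f = Ex_h h (\<lambda>x. c * f x)"
  by (simp add: Ex_h_def sum_distrib_left)

lemma Ex_h_cong: "(\<And>x. x \<in> hctx h \<Longrightarrow> f x = g x) \<Longrightarrow> Ex_h h f = Ex_h h g"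
  unfolding Ex_h_def hctx_def by (intro arg_cong[where f = "\<lambda>u. u / _"] sum.cong) (auto simp: split_def)

lemma sum_mult_Ex_h: "(\<Sum>\<pi>\<in>Pol. Q \<pi> * Ex_h h (f \<pi>)) = Ex_h h (\<lambda>x. \<Sum>\<pi>\<in>Pol. Q \<pi> * f \<pi> x)"
  unfolding Ex_h_def sum_divide_distrib sum_distrib_left by (subst sum.swap) (simp add: field_simps)

lemma smoothed_self_ratio_le:
  assumes "\<And>z. 0 \<le> W z" "0 < m" "real (card A) * m \<le> 1"
  shows "(1 - real (card A) * m) * Ex_h h (\<lambda>x. \<Sum>a\<in>A. W (x, a) / smooth (card A) m W (x, a)) \<le> card A"
proof -
  have "(1 - real (card A) * m) * (W z / smooth (card A) m W z) \<le> 1" for z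
  proof -
    have "0 \<le> (1 - real (card A) * m) * W z" using assms by simp
    then show ?thesis using assms(2) by (simp add: smooth_def divide_le_eq)
  qed
  then have "(1 - real (card A) * m) * (\<Sum>a\<in>A. W (x, a) / smooth (card A) m W (x, a)) \<le> card A" for x
    using sum_mono[of A "\<lambda>a. (1 - real (card A) * m) * (W (x, a) / smooth (card A) m W (x, a))" "\<lambda>_. 1"]
    by (simp add: sum_distrib_left)
  then show ?thesis
    unfolding Ex_h_cmult by (intro Ex_h_le_const) auto
qed

lemma Delta_polvec_argmax:
  assumes "finite Pol" "Pol \<noteq> {}"
  obtains \<pi> where "\<pi> \<in> Pol" "Delta A h Pol (polvec A h \<pi>) = 0"
proof -
  have "Max ((\<lambda>\<pi>. eta h (polvec A h \<pi>)) ` Pol) \<in> (\<lambda>\<pi>. eta h (polvec A h \<pi>)) ` Pol"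
    using assms by (intro Max_in) auto
  then show ?thesis using that unfolding Delta_def by force
qed

lemma barrier_minimizer_regret_le:
  fixes m lam :: real
  assumes "finite A" "finite Pol" "Pol \<noteq> {}" "h \<noteq> []" "0 < m" "real (card A) * m \<le> 1/2" "0 < lam"
    and P\<^sub>0: "P\<^sub>0 \<in> dist_simplex Pol"
    and min: "\<And>P. P \<in> dist_simplex Pol \<Longrightarrow> barrier_potential A h Pol m lam P\<^sub>0 \<le> barrier_potential A h Pol m lam P"
  shows "Delta A h Pol (polmix A h Pol P\<^sub>0) \<le> card A / lam"
proof -
  let ?W\<^sub>0 = "polmix A h Pol P\<^sub>0" and ?k = "1 - real (card A) * m"
  let ?ratio = "\<lambda>V. Ex_h h (\<lambda>x. \<Sum>a\<in>A. V (x, a) / smooth (card A) m ?W\<^sub>0 (x, a))"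
  have W\<^sub>0_nonneg: "0 \<le> ?W\<^sub>0 z" for z
    using dist_simplex_is_dist[OF P\<^sub>0] by (intro polmix_nonneg) (simp add: is_dist_def)
  obtain \<pi> where "\<pi> \<in> Pol" "Delta A h Pol (polvec A h \<pi>) = 0"
    using Delta_polvec_argmax[OF assms(2,3)] .
  define Q where "Q = (\<lambda>\<pi>'. if \<pi>' = \<pi> then 1 else 0 :: real)"
  have "is_dist Pol Q" using \<open>\<pi> \<in> Pol\<close> assms(2) by (simp add: is_dist_def Q_def)
  have "polmix A h Pol Q = polvec A h \<pi>"
    unfolding Q_def by (rule polmix_point_mass[OF assms(2) \<open>\<pi> \<in> Pol\<close>])
  then have "?k * ?ratio (polvec A h \<pi>) \<le> ?k * ?ratio ?W\<^sub>0 - lam * Delta A h Pol ?W\<^sub>0"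
    using barrier_potential_first_order[OF assms(1,2,4,5,6) P\<^sub>0 min \<open>is_dist Pol Q\<close>]
      \<open>Delta A h Pol (polvec A h \<pi>) = 0\<close> by simp
  moreover have "?k * ?ratio ?W\<^sub>0 \<le> card A"
    using smoothed_self_ratio_le[of ?W\<^sub>0 m A h, OF W\<^sub>0_nonneg] assms(5,6) by simp
  moreover have "0 \<le> ?k * ?ratio (polvec A h \<pi>)"
    using smooth_polmix_pos[OF P\<^sub>0 assms(5)] assms(6)
    by (auto simp: polvec_def intro!: mult_nonneg_nonneg Ex_h_nonneg sum_nonneg divide_nonneg_pos)
  ultimately have "lam * Delta A h Pol ?W\<^sub>0 \<le> card A" by linarith
  then show ?thesis using assms(7) by (simp add: field_simps)
qed

lemma barrier_minimizer_ratio_le: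
  fixes m lam :: real
  assumes "finite A" "finite Pol" "h \<noteq> []" "0 < m" "real (card A) * m \<le> 1/2" "0 < lam"
    and P\<^sub>0: "P\<^sub>0 \<in> dist_simplex Pol"
    and min: "\<And>P. P \<in> dist_simplex Pol \<Longrightarrow> barrier_potential A h Pol m lam P\<^sub>0 \<le> barrier_potential A h Pol m lam P"
    and Q: "is_dist Pol Q"
  shows "Ex_h h (\<lambda>x. \<Sum>a\<in>A. polmix A h Pol Q (x, a) / smooth (card A) m (polmix A h Pol P\<^sub>0) (x, a))
           \<le> 2 * (card A + lam * Delta A h Pol (polmix A h Pol Q))"
proof -
  let ?W\<^sub>0 = "polmix A h Pol P\<^sub>0" and ?k = "1 - real (card A) * m"
  let ?ratio = "\<lambda>V. Ex_h h (\<lambda>x. \<Sum>a\<in>A. V (x, a) / smooth (card A) m ?W\<^sub>0 (x, a))"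
  have W\<^sub>0_nonneg: "0 \<le> ?W\<^sub>0 z" for z
    using dist_simplex_is_dist[OF P\<^sub>0] by (intro polmix_nonneg) (simp add: is_dist_def)
  have "?k * ?ratio (polmix A h Pol Q) \<le> ?k * ?ratio ?W\<^sub>0 + lam * (Delta A h Pol (polmix A h Pol Q) - Delta A h Pol ?W\<^sub>0)"
    by (rule barrier_potential_first_order[OF assms(1-5) P\<^sub>0 min Q])
  moreover have "?k * ?ratio ?W\<^sub>0 \<le> card A"
    using smoothed_self_ratio_le[of ?W\<^sub>0 m A h, OF W\<^sub>0_nonneg] assms(4,5) by simp
  moreover have "0 \<le> lam * Delta A h Pol ?W\<^sub>0"
    using assms(6) Delta_polmix_nonneg[OF assms(2) dist_simplex_is_dist[OF P\<^sub>0]] by simp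
  ultimately have "?k * ?ratio (polmix A h Pol Q) \<le> card A + lam * Delta A h Pol (polmix A h Pol Q)"
    by (simp add: right_diff_distrib)
  then have upper: "2 * (?k * ?ratio (polmix A h Pol Q)) \<le> 2 * (card A + lam * Delta A h Pol (polmix A h Pol Q))"
    by (rule mult_left_mono) simp
  have "1 * ?ratio (polmix A h Pol Q) \<le> (2 * ?k) * ?ratio (polmix A h Pol Q)"
    using Q smooth_polmix_pos[OF P\<^sub>0 assms(4)] assms(5) polmix_nonneg[of Pol Q]
    by (intro mult_right_mono) (auto simp: is_dist_def intro!: Ex_h_nonneg sum_nonneg divide_nonneg_pos)
  then have "?ratio (polmix A h Pol Q) \<le> 2 * (?k * ?ratio (polmix A h Pol Q))"
    by (simp only: mult_1 mult.assoc)
  then show ?thesis using upper by (rule order_trans)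
qed

lemma div_sqrt_mult_div_four:
  fixes K b :: real
  assumes "1 \<le> K"
  shows "K / (sqrt (K * b) / 4) = 4 * sqrt (K / b)"
proof -
  have "K / (sqrt (K * b) / 4) = 4 * (sqrt K * sqrt K) / (sqrt K * sqrt b)"
    unfolding real_sqrt_mult using assms by simp
  also have "\<dots> = 4 * (sqrt K / sqrt b)"
    using assms mult_divide_mult_cancel_left[of "sqrt K" "sqrt K" "sqrt b"] by simp
  finally show ?thesis by (simp add: real_sqrt_divide)
qed

lemma low_regret_low_variance_mixture_exists:
  fixes b m :: real
  assumes "finite A" "A \<noteq> {}" "finite Pol" "Pol \<noteq> {}" "h \<noteq> []"
    and "0 < m" "real (card A) * m \<le> 1/2" "0 < b"
  obtains P\<^sub>0 where "is_dist Pol P\<^sub>0" "Delta A h Pol (polmix A h Pol P\<^sub>0) \<le> 8 * sqrt (card A / b)"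
    "\<And>Q. is_dist Pol Q \<Longrightarrow>
       Ex_h h (\<lambda>x. \<Sum>a\<in>A. polmix A h Pol Q (x, a) / smooth (card A) m (polmix A h Pol P\<^sub>0) (x, a))
         \<le> max (4 * real (card A)) (b * (Delta A h Pol (polmix A h Pol Q))\<^sup>2)"
proof -
  define K where "K = real (card A)"
  define lam where "lam = sqrt (K * b) / 4"
  have "1 \<le> K" using assms(1,2) by (simp add: K_def Suc_le_eq card_gt_0_iff)
  then have "0 < lam" using assms(8) by (simp add: lam_def)
  obtain P\<^sub>0 where P\<^sub>0: "P\<^sub>0 \<in> dist_simplex Pol" and min: "\<And>P. P \<in> dist_simplex Pol \<Longrightarrow>
      barrier_potential A h Pol m lam P\<^sub>0 \<le> barrier_potential A h Pol m lam P"
    using assms(7) barrier_potential_has_minimizer[OF assms(3,4,6), of A h lam] by auto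
  have "Delta A h Pol (polmix A h Pol P\<^sub>0) \<le> 4 * sqrt (K / b)"
    using barrier_minimizer_regret_le[OF assms(1,3,4,5,6,7) \<open>0 < lam\<close> P\<^sub>0 min]
      div_sqrt_mult_div_four[OF \<open>1 \<le> K\<close>] by (simp add: lam_def K_def)
  also have "\<dots> \<le> 8 * sqrt (K / b)" using \<open>1 \<le> K\<close> assms(8) by simp
  finally have "Delta A h Pol (polmix A h Pol P\<^sub>0) \<le> 8 * sqrt (card A / b)" by (simp add: K_def)
  moreover have "Ex_h h (\<lambda>x. \<Sum>a\<in>A. polmix A h Pol Q (x, a) / smooth (card A) m (polmix A h Pol P\<^sub>0) (x, a))
      \<le> max (4 * K) (b * (Delta A h Pol (polmix A h Pol Q))\<^sup>2)" if "is_dist Pol Q" for Q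
  proof -
    have "Ex_h h (\<lambda>x. \<Sum>a\<in>A. polmix A h Pol Q (x, a) / smooth (card A) m (polmix A h Pol P\<^sub>0) (x, a))
        \<le> 2 * (K + lam * Delta A h Pol (polmix A h Pol Q))"
      using barrier_minimizer_ratio_le[OF assms(1,3,5,6,7) \<open>0 < lam\<close> P\<^sub>0 min that] by (simp add: K_def)
    also have "\<dots> \<le> max (4 * K) (b * (Delta A h Pol (polmix A h Pol Q))\<^sup>2)"
      unfolding lam_def using \<open>1 \<le> K\<close> assms(8) Delta_polmix_nonneg[OF assms(3) that]
      by (rule twice_add_sqrt_le_max)
    finally show ?thesis .
  qed
  ultimately show ?thesis
    using that dist_simplex_is_dist[OF P\<^sub>0] by (simp add: K_def)
qed

lemma sum_policies_eq_sum_actions: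
  assumes "finite A" "x \<in> hctx h" "\<forall>\<pi>\<in>Pol. \<pi> x \<in> A"
  shows "(\<Sum>\<pi>\<in>Pol. Q \<pi> * (1 / s (x, \<pi> x))) = (\<Sum>a\<in>A. polmix A h Pol Q (x, a) / s (x, a))"
proof -
  have "(\<Sum>a\<in>A. polmix A h Pol Q (x, a) / s (x, a))
      = (\<Sum>a\<in>A. \<Sum>\<pi>\<in>Pol. Q \<pi> * (if \<pi> x = a then 1 / s (x, a) else 0))"
    unfolding polmix_def sum_divide_distrib using assms(2) by (intro sum.cong refl) (auto simp: polvec_def)
  also have "\<dots> = (\<Sum>\<pi>\<in>Pol. Q \<pi> * (\<Sum>a\<in>A. if \<pi> x = a then 1 / s (x, a) else 0))"
    by (subst sum.swap) (simp add: sum_distrib_left)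
  also have "\<dots> = (\<Sum>\<pi>\<in>Pol. Q \<pi> * (1 / s (x, \<pi> x)))"
    using assms(1,3) by (intro sum.cong refl) (simp add: sum.delta)
  finally show ?thesis by simp
qed

lemma rucb_feasibleI:
  assumes "finite A" "finite Pol" "\<forall>\<pi>\<in>Pol. \<forall>x. \<pi> x \<in> A" "is_dist Pol P"
    and constraint: "\<And>Q. is_dist Pol Q \<Longrightarrow>
      Ex_h h (\<lambda>x. \<Sum>a\<in>A. polmix A h Pol Q (x, a)
                         / smooth (card A) (mu (card A) (card Pol) \<delta> t) (polmix A h Pol P) (x, a))
      \<le> max (4 * real (card A)) (beta (card Pol) \<delta> t * (Delta A h Pol (polmix A h Pol Q))\<^sup>2)"
  shows "rucb_feasible A h Pol \<delta> t P"
  unfolding rucb_feasible_def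
proof (intro conjI allI impI)
  fix Q assume "is_dist Pol Q"
  let ?s = "smooth (card A) (mu (card A) (card Pol) \<delta> t) (polmix A h Pol P)"
  have "(\<Sum>\<pi>\<in>Pol. Q \<pi> * Ex_h h (\<lambda>x. 1 / ((1 - real (card A) * mu (card A) (card Pol) \<delta> t)
           * WP A h Pol P (x, \<pi> x) + mu (card A) (card Pol) \<delta> t)))
      = Ex_h h (\<lambda>x. \<Sum>\<pi>\<in>Pol. Q \<pi> * (1 / ?s (x, \<pi> x)))"
    unfolding sum_mult_Ex_h WP_eq_polmix[OF assms(2)] smooth_def ..
  also have "\<dots> = Ex_h h (\<lambda>x. \<Sum>a\<in>A. polmix A h Pol Q (x, a) / ?s (x, a))"
    using assms(1,3) by (intro Ex_h_cong sum_policies_eq_sum_actions) auto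
  also have "\<dots> \<le> max (4 * real (card A)) (beta (card Pol) \<delta> t * (Delta A h Pol (polmix A h Pol Q))\<^sup>2)"
    using constraint[OF \<open>is_dist Pol Q\<close>] .
  finally show "(\<Sum>\<pi>\<in>Pol. Q \<pi> * Ex_h h (\<lambda>x. 1 / ((1 - real (card A) * mu (card A) (card Pol) \<delta> t)
           * WP A h Pol P (x, \<pi> x) + mu (card A) (card Pol) \<delta> t)))
      \<le> max (4 * real (card A))
          (real (t - 1) * (Delta A h Pol (WP A h Pol Q))\<^sup>2 / (180 * Cc (card Pol) \<delta> (t - 1)))"
    by (simp add: WP_eq_polmix[OF assms(2)] beta_def)
qed (rule assms(4))

lemma OPT_le_Delta_polmix:
  assumes "finite Pol" "rucb_feasible A h Pol \<delta> t P"
  shows "OPT A h Pol \<delta> t \<le> Delta A h Pol (polmix A h Pol P)"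
proof -
  have "OPT A h Pol \<delta> t \<le> (\<Sum>\<pi>\<in>Pol. P \<pi> * Delta A h Pol (polvec A h \<pi>))"
    unfolding OPT_def
  proof (rule cInf_lower)
    show "bdd_below {\<Sum>\<pi>\<in>Pol. P \<pi> * Delta A h Pol (polvec A h \<pi>) | P. rucb_feasible A h Pol \<delta> t P}"
      using assms(1)
      by (intro bdd_belowI[of _ 0])
        (auto simp: rucb_feasible_def is_dist_def intro!: sum_nonneg mult_nonneg_nonneg Delta_polvec_nonneg)
  qed (use assms(2) in blast)
  then show ?thesis
    using assms(2) by (simp add: Delta_polmix rucb_feasible_def)
qed

lemma Cc_pos:
  assumes "1 \<le> N" "1 \<le> s" "0 < \<delta>" "\<delta> < 1"
  shows "0 < Cc N \<delta> s"
proof -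
  have "1 \<le> real N * real s" using assms(1,2) mult_mono[of 1 "real N" 1 "real s"] by simp
  then have "1 < real N * real s / \<delta>" using assms(3,4) by (simp add: field_simps)
  then show ?thesis by (simp add: Cc_def)
qed

lemma sqrt_div_beta_le:
  assumes "2 \<le> t" "0 \<le> Cc N \<delta> (t - 1)"
  shows "8 * sqrt (real K / beta N \<delta> t) \<le> 110 * sqrt (real K * Cc N \<delta> (t - 1) / real (t - 1))"
proof -
  define y where "y = real K * Cc N \<delta> (t - 1) / real (t - 1)"
  have "real K / beta N \<delta> t = 180 * y" using assms(1) by (simp add: beta_def y_def field_simps)
  then have "8 * sqrt (real K / beta N \<delta> t) = (8 * sqrt 180) * sqrt y" by (simp add: real_sqrt_mult)
  also have "\<dots> \<le> 110 * sqrt y"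
  proof (rule mult_right_mono)
    have "sqrt 180 \<le> sqrt ((55/4)^2)" by (subst real_sqrt_le_iff) (simp add: power2_eq_square)
    then show "8 * sqrt 180 \<le> (110::real)" by simp
  qed (use assms(2) in \<open>simp add: y_def\<close>)
  finally show ?thesis by (simp add: y_def)
qed

lemma mu_bounds:
  assumes "1 \<le> K" "1 \<le> t" "0 < Cc N \<delta> t"
  shows "0 < mu K N \<delta> t" "real K * mu K N \<delta> t \<le> 1/2"
proof -
  show "0 < mu K N \<delta> t" using assms by (simp add: mu_def)
  have "real K * mu K N \<delta> t \<le> real K * (1 / (2 * real K))"
    using assms(1) by (intro mult_left_mono) (simp_all add: mu_def)
  then show "real K * mu K N \<delta> t \<le> 1/2" using assms(1) by simp
qed

theorem lemma15:
  fixes A :: "'a set" and Pol :: "('x \<Rightarrow> 'a) set" and h :: "('x,'a) hist"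
    and \<delta> :: real and t K N :: nat
  assumes "finite A" "A \<noteq> {}" "K = card A"
    and "finite Pol" "Pol \<noteq> {}" "N = card Pol" "\<forall>\<pi>\<in>Pol. \<forall>x. \<pi> x \<in> A"
    and "0 < \<delta>" "\<delta> < 1"
    and "t \<ge> 2" "length h = t - 1"
    and "\<forall>(x,a,r,p)\<in>set h. a \<in> A \<and> 0 \<le> r \<and> r \<le> 1 \<and> 0 < p \<and> p \<le> 1"
  shows "(\<exists>W. Delta A h Pol W \<le> 8 * sqrt (real K / beta N \<delta> t) \<and> W \<in> CC A h Pol \<and>
            (\<forall>Z\<in>CC A h Pol.
               Ex_h h (\<lambda>x. \<Sum>a\<in>A. Z (x,a) / smooth K (mu K N \<delta> t) W (x,a))
                 \<le> max (4 * real K) (beta N \<delta> t * (Delta A h Pol Z)\<^sup>2)))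
       \<and> OPT A h Pol \<delta> t \<le> 8 * sqrt (real K / beta N \<delta> t)
       \<and> 8 * sqrt (real K / beta N \<delta> t) \<le> 110 * sqrt (real K * Cc N \<delta> (t - 1) / real (t - 1))"
proof -
  have "1 \<le> K" "1 \<le> N" using assms(1-6) by (simp_all add: Suc_le_eq card_gt_0_iff)
  have "h \<noteq> []" using assms(10,11) by auto
  have C: "0 < Cc N \<delta> t" "0 < Cc N \<delta> (t - 1)" using Cc_pos \<open>1 \<le> N\<close> assms(8-10) by simp_all
  then have "0 < beta N \<delta> t" using assms(10) by (simp add: beta_def)
  have "0 < mu K N \<delta> t" "real (card A) * mu K N \<delta> t \<le> 1/2"
    using mu_bounds[OF \<open>1 \<le> K\<close> _ C(1)] assms(3,10) by simp_all
  then obtain P\<^sub>0 where P\<^sub>0: "is_dist Pol P\<^sub>0"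
    and regret: "Delta A h Pol (polmix A h Pol P\<^sub>0) \<le> 8 * sqrt (real K / beta N \<delta> t)"
    and ratio: "\<And>Q. is_dist Pol Q \<Longrightarrow>
      Ex_h h (\<lambda>x. \<Sum>a\<in>A. polmix A h Pol Q (x, a) / smooth K (mu K N \<delta> t) (polmix A h Pol P\<^sub>0) (x, a))
        \<le> max (4 * real K) (beta N \<delta> t * (Delta A h Pol (polmix A h Pol Q))\<^sup>2)"
    using low_regret_low_variance_mixture_exists[OF assms(1,2,4,5) \<open>h \<noteq> []\<close> _ _ \<open>0 < beta N \<delta> t\<close>]
    unfolding assms(3) by blast
  have "rucb_feasible A h Pol \<delta> t P\<^sub>0"
    using assms(1,4,7) P\<^sub>0 ratio unfolding assms(3,6) by (rule rucb_feasibleI)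
  then have "OPT A h Pol \<delta> t \<le> 8 * sqrt (real K / beta N \<delta> t)"
    using OPT_le_Delta_polmix[OF assms(4)] regret by (meson order_trans)
  moreover have "\<forall>Z\<in>CC A h Pol. Ex_h h (\<lambda>x. \<Sum>a\<in>A. Z (x, a) / smooth K (mu K N \<delta> t) (polmix A h Pol P\<^sub>0) (x, a))
      \<le> max (4 * real K) (beta N \<delta> t * (Delta A h Pol Z)\<^sup>2)"
    using CC_obtain_polmix[OF assms(4)] ratio by blast
  ultimately show ?thesis
    using regret polmix_in_CC[OF assms(4) P\<^sub>0] sqrt_div_beta_le[OF assms(10) less_imp_le[OF C(2)]] by blast
qed

end
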